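(* For every $a_1,\dots,a_{2^n}\in F$ and every $w\in F^d$: (1) there is a prover strategy $r$ such that Alice's output equals $\tilde A(w)$ with probability $1$; (2) for every prover strategy $r$, Alice's output lies in $\{\tilde A(w),Err\}$ with probability at least $1-1/n^{c-1.5}$.
   Context: Parameters. - $n>4$ is a power of $2$ with $\log_2 n$ even, and $d:=2n/\log_2 n$ is assumed to be an integer. - $F$ is a finite field with $|F|=2^a=n^c$, where $c\ge 2$ is a constant integer. - $H\subset F$ is a fixed subset with $|H|=\sqrt n$ (so $|H^d|=2^n$), and $\pi:H^d\to[2^n]$ is a fixed bijection. Low degree extension. - For $a_1,\dots,a_{2^n}\in F$, define $A:H^d\to F$ by $A(z)=a_{\pi(z)}$. - The low degree extension $\tilde A:F^d\to F$ is the unique polynomial of degree at most $|H|-1$ in each variable that agrees with $A$ on $H^d$. Its total degree is less than $n^{1.5}$. - The quantum low degree extension is $|\Psi(a_1,\dots,a_{2^n})\rangle=|F|^{-d/2}\sum_{z\in F^d}|z_1\rangle\cdots|z_d\rangle|\tilde A(z)\rangle$, a state of $O(n)$ qubits where each register holds an element of $F$. Measuring it in the standard basis yields a uniformly random $z\in F^d$ together with $\tilde A(z)$. Retrieval protocol (Alice holds $|\Psi(a_1,\dots,a_{2^n})\rangle$ and wants $\tilde A(w)$). - Alice measures the state, obtaining a uniform $z\in F^d$ and $\tilde A(z)$. If $z=w$, she outputs $\tilde A(z)$. - Otherwise she sends the line $\ell=\{w+(z-w)t:t\in F\}$ to the prover Merlin. Merlin knows $w$ and $\ell$ but not $z$.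 - A prover strategy $r$ is a deterministic assignment, to each line $\ell$ through $w$, of a function $g_\ell:\ell\to F$. - Let $g(t)=g_\ell(w+(z-w)t)$. Alice outputs $Err$ if $g$ is not a univariate polynomial of degree $<n^{1.5}$, or if $g(1)\ne\tilde A(z)$. Otherwise she outputs $g(0)$. *)

theory Defs
  imports "HOL-Library.FuncSet" "HOL-Computational_Algebra.Polynomial" Complex_Main
begin

definition cube :: "nat \<Rightarrow> 'a set \<Rightarrow> (nat \<Rightarrow> 'a) set" where
  "cube d S = ({..<d} \<rightarrow>\<^sub>E S)"

definition lagrange_basis :: "'a::field set \<Rightarrow> 'a \<Rightarrow> 'a \<Rightarrow> 'a" where
  "lagrange_basis H h x = (\<Prod>h'\<in>H - {h}. (x - h') / (h - h'))"

text \<open>The low degree extension of A : H^d \<rightarrow> F: the unique polynomial of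
  individual degree at most |H|-1 agreeing with A on H^d, written out
  via multivariate Lagrange interpolation.\<close>
definition lde :: "'a::field set \<Rightarrow> nat \<Rightarrow> ((nat \<Rightarrow> 'a) \<Rightarrow> 'a) \<Rightarrow> (nat \<Rightarrow> 'a) \<Rightarrow> 'a" where
  "lde H d A z = (\<Sum>h\<in>cube d H. A h * (\<Prod>i<d. lagrange_basis H (h i) (z i)))"

definition line_pt :: "nat \<Rightarrow> (nat \<Rightarrow> 'a::field) \<Rightarrow> (nat \<Rightarrow> 'a) \<Rightarrow> 'a \<Rightarrow> (nat \<Rightarrow> 'a)" where
  "line_pt d w z t = (\<lambda>i\<in>{..<d}. w i + (z i - w i) * t)"

text \<open>The line through w and z, as a set of points (all Merlin gets to see).\<close>
definition line_through :: "nat \<Rightarrow> (nat \<Rightarrow> 'a::field) \<Rightarrow> (nat \<Rightarrow> 'a) \<Rightarrow> (nat \<Rightarrow> 'a) set" where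
  "line_through d w z = range (line_pt d w z)"

definition is_poly_deg_lt :: "('a::field \<Rightarrow> 'a) \<Rightarrow> real \<Rightarrow> bool" where
  "is_poly_deg_lt g D = (\<exists>p. real (degree p) < D \<and> (\<forall>t. g t = poly p t))"

text \<open>Alice's output (None = Err) when the measurement yields z, for prover
  strategy r assigning to each line (a set of points) a function on points.\<close>
definition alice_output ::
  "real \<Rightarrow> nat \<Rightarrow> ((nat \<Rightarrow> 'a::field) \<Rightarrow> 'a) \<Rightarrow> (nat \<Rightarrow> 'a)
     \<Rightarrow> ((nat \<Rightarrow> 'a) set \<Rightarrow> (nat \<Rightarrow> 'a) \<Rightarrow> 'a) \<Rightarrow> (nat \<Rightarrow> 'a) \<Rightarrow> 'a option" where
  "alice_output D d At w r z =
     (if z = w then Some (At z)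
      else (let g = (\<lambda>t. r (line_through d w z) (line_pt d w z t)) in
            if \<not> is_poly_deg_lt g D \<or> g 1 \<noteq> At z then None else Some (g 0)))"

definition prob_unif :: "'b set \<Rightarrow> ('b \<Rightarrow> bool) \<Rightarrow> real" where
  "prob_unif S P = real (card {z\<in>S. P z}) / real (card S)"

end

theory Submission
  imports Defs
begin

text \<open>Restricted to any line through \<open>w\<close>, the low degree extension is a univariate
  polynomial of degree \<open>d (|H| - 1) < n powr 1.5\<close>, so the honest prover is always accepted.
  Merlin sees only the line, not the measured point, so on each line he commits to one
  polynomial; if it is wrong at \<open>w\<close> it agrees with the truth at fewer than \<open>n powr 1.5\<close> points
  of the line, and only those outcomes fool Alice. The punctured lines through \<open>w\<close> cover
  \<open>F\<^sup>d - {w}\<close> evenly, each with \<open>|F| - 1\<close> points, so Alice is fooled with probability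
  at most \<open>n powr 1.5 / |F| = 1 / n powr (c - 1.5)\<close>.\<close>

lemma lde_on_line_is_poly:
  fixes H :: "'a::field set"
  assumes "finite H"
  shows "\<exists>p. degree p \<le> d * (card H - 1) \<and> (\<forall>t. lde H d A (line_pt d w z t) = poly p t)"
proof -
  define lin :: "(nat \<Rightarrow> 'a) \<Rightarrow> nat \<Rightarrow> 'a \<Rightarrow> 'a poly" where
    "lin h i h' = [:(w i - h') / (h i - h'), (z i - w i) / (h i - h'):]" for h i h'
  define p where
    "p = (\<Sum>h\<in>cube d H. smult (A h) (\<Prod>i<d. \<Prod>h'\<in>H - {h i}. lin h i h'))"
  have "lde H d A (line_pt d w z t) = poly p t" for t
    unfolding lde_def p_def lin_def lagrange_basis_def line_pt_def
    by (simp add: poly_sum poly_prod mult.commute diff_add_eq flip: add_divide_distrib)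
  moreover have "degree p \<le> d * (card H - 1)"
    unfolding p_def
  proof (intro degree_sum_le)
    show "finite (cube d H)"
      unfolding cube_def using assms by (intro finite_PiE) auto
  next
    fix h assume h: "h \<in> cube d H"
    have "degree (\<Prod>h'\<in>H - {h i}. lin h i h') \<le> card H - 1" if "i < d" for i
    proof -
      have "h i \<in> H" using h that unfolding cube_def by auto
      have "degree (\<Prod>h'\<in>H - {h i}. lin h i h') \<le> (\<Sum>h'\<in>H - {h i}. degree (lin h i h'))"
        using degree_prod_sum_le[of "H - {h i}" "lin h i"] assms by (simp add: o_def)
      also have "\<dots> \<le> (\<Sum>h'\<in>H - {h i}. 1)"
        by (intro sum_mono) (simp add: lin_def)
      also have "\<dots> = card H - 1"
        using assms \<open>h i \<in> H\<close> by simp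
      finally show ?thesis .
    qed
    then have "degree (\<Prod>i<d. \<Prod>h'\<in>H - {h i}. lin h i h') \<le> (\<Sum>i<d. card H - 1)"
      by (intro order.trans[OF degree_prod_sum_le] sum_mono) auto
    then show "degree (smult (A h) (\<Prod>i<d. \<Prod>h'\<in>H - {h i}. lin h i h')) \<le> d * (card H - 1)"
      by (simp add: order.trans[OF degree_smult_le])
  qed
  ultimately show ?thesis by blast
qed

lemma line_pt_0: "w \<in> cube d S \<Longrightarrow> line_pt d w z 0 = w"
  unfolding line_pt_def cube_def by (auto simp: PiE_def extensional_def)

lemma line_pt_1: "z \<in> cube d S \<Longrightarrow> line_pt d w z 1 = z"
  unfolding line_pt_def cube_def by (auto simp: PiE_def extensional_def)

lemma line_pt_in_cube: "line_pt d w z s \<in> cube d UNIV"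
  unfolding line_pt_def cube_def by auto

lemma line_pt_line_pt: "line_pt d w (line_pt d w z s) t = line_pt d w z (s * t)"
  unfolding line_pt_def by (auto simp: algebra_simps)

lemma line_through_line_pt:
  assumes "s \<noteq> 0"
  shows "line_through d w (line_pt d w z s) = line_through d w z"
proof -
  have "range (\<lambda>t. s * t) = (UNIV :: 'a set)"
    using assms by (metis surj_def mult.commute nonzero_divide_eq_eq)
  then show ?thesis
    unfolding line_through_def line_pt_line_pt[abs_def] by (metis image_image)
qed

lemma bij_betw_line_pt_dilation:
  assumes "s \<noteq> 0"
  shows "bij_betw (\<lambda>z. line_pt d w z s) (cube d UNIV) (cube d UNIV)"
  by (rule bij_betw_byWitness[where f' = "\<lambda>z. line_pt d w z (inverse s)"])
    (use assms in \<open>auto simp: line_pt_line_pt line_pt_1 line_pt_in_cube\<close>)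

lemma is_poly_deg_lt_rescale:
  assumes "is_poly_deg_lt (\<lambda>t. g (s * t)) D" and "s \<noteq> 0"
  shows "is_poly_deg_lt g D"
proof -
  obtain p where p: "real (degree p) < D" "\<And>t. g (s * t) = poly p t"
    using assms(1) unfolding is_poly_deg_lt_def by blast
  have "g t = poly (p \<circ>\<^sub>p [:0, inverse s:]) t" for t
    using p(2)[of "inverse s * t"] assms(2) by (simp add: poly_pcompose field_simps)
  moreover have "degree (p \<circ>\<^sub>p [:0, inverse s:]) = degree p"
    using assms(2) by (simp add: degree_pcompose)
  ultimately show ?thesis
    unfolding is_poly_deg_lt_def using p(1) by metis
qed

lemma card_poly_agree_le:
  fixes p q :: "'a::idom poly"
  assumes "poly p x \<noteq> poly q x"
  shows "card {t. poly p t = poly q t} \<le> max (degree p) (degree q)"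
proof -
  have "p - q \<noteq> 0" using assms by auto
  then have "card {t. poly (p - q) t = 0} \<le> degree (p - q)"
    by (rule card_poly_roots_bound)
  then show ?thesis
    using degree_diff_le_max[of p q] by simp
qed

lemma card_bij_betw_preimage:
  assumes "bij_betw f A A'" and "B \<subseteq> A'"
  shows "card {x \<in> A. f x \<in> B} = card B"
proof -
  have "f ` {x \<in> A. f x \<in> B} = B"
    using assms by (auto simp: bij_betw_def)
  then have "bij_betw f {x \<in> A. f x \<in> B} B"
    using assms(1) by (auto intro: bij_betw_subset)
  then show ?thesis by (rule bij_betw_same_card)
qed

definition alice_fooled ::
  "real \<Rightarrow> nat \<Rightarrow> ((nat \<Rightarrow> 'a::field) \<Rightarrow> 'a) \<Rightarrow> (nat \<Rightarrow> 'a)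
     \<Rightarrow> ((nat \<Rightarrow> 'a) set \<Rightarrow> (nat \<Rightarrow> 'a) \<Rightarrow> 'a) \<Rightarrow> (nat \<Rightarrow> 'a) \<Rightarrow> bool" where
  "alice_fooled D d At w r z \<longleftrightarrow> alice_output D d At w r z \<notin> {Some (At w), None}"

lemma alice_output_honest:
  assumes "w \<in> cube d UNIV" and "z \<in> cube d UNIV"
    and "is_poly_deg_lt (\<lambda>t. At (line_pt d w z t)) D"
  shows "alice_output D d At w (\<lambda>L. At) z = Some (At w)"
  using assms by (simp add: alice_output_def line_pt_0 line_pt_1)

lemma alice_fooled_on_line:
  assumes "alice_fooled D d At w r (line_pt d w z s)" and "s \<noteq> 0"
  defines "G \<equiv> \<lambda>t. r (line_through d w z) (line_pt d w z t)"
  shows "is_poly_deg_lt G D" and "G s = At (line_pt d w z s)" and "G 0 \<noteq> At w"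
proof -
  let ?z = "line_pt d w z s"
  have g: "(\<lambda>t. r (line_through d w ?z) (line_pt d w ?z t)) = (\<lambda>t. G (s * t))"
    unfolding G_def line_through_line_pt[OF assms(2)] line_pt_line_pt ..
  have "?z \<noteq> w"
    using assms(1) by (auto simp: alice_fooled_def alice_output_def)
  then have "is_poly_deg_lt (\<lambda>t. G (s * t)) D \<and> G s = At ?z \<and> G 0 \<noteq> At w"
    using assms(1) unfolding alice_fooled_def alice_output_def g Let_def
    by (auto split: if_splits simp: line_pt_1[OF line_pt_in_cube])
  then show "is_poly_deg_lt G D" "G s = At ?z" "G 0 \<noteq> At w"
    using is_poly_deg_lt_rescale assms(2) by blast+
qed

lemma card_fooled_on_line_less:
  assumes w: "w \<in> cube d UNIV"
    and truth: "is_poly_deg_lt (\<lambda>t. At (line_pt d w z t)) D"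
  shows "real (card {s. s \<noteq> 0 \<and> alice_fooled D d At w r (line_pt d w z s)}) < D"
proof (cases "{s. s \<noteq> 0 \<and> alice_fooled D d At w r (line_pt d w z s)} = {}")
  case True
  then show ?thesis
    using truth unfolding is_poly_deg_lt_def
    by (metis card.empty of_nat_0 of_nat_0_le_iff le_less_trans)
next
  case False
  define S where "S = {s. s \<noteq> 0 \<and> alice_fooled D d At w r (line_pt d w z s)}"
  define G where "G = (\<lambda>t. r (line_through d w z) (line_pt d w z t))"
  obtain Q where Q: "real (degree Q) < D" "\<And>t. At (line_pt d w z t) = poly Q t"
    using truth unfolding is_poly_deg_lt_def by blast
  obtain s0 where "s0 \<in> S"
    using False unfolding S_def by blast
  then obtain P where P: "real (degree P) < D" "\<And>t. G t = poly P t"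
    using alice_fooled_on_line(1) unfolding S_def G_def is_poly_deg_lt_def by blast
  have agree: "S \<subseteq> {t. poly P t = poly Q t}"
  proof
    fix s assume "s \<in> S"
    then have "G s = At (line_pt d w z s)"
      using alice_fooled_on_line(2) unfolding S_def G_def by blast
    then show "s \<in> {t. poly P t = poly Q t}"
      using P(2) Q(2) by simp
  qed
  have "G 0 \<noteq> At w"
    using \<open>s0 \<in> S\<close> alice_fooled_on_line(3) unfolding S_def G_def by blast
  then have differ: "poly P 0 \<noteq> poly Q 0"
    using P(2) Q(2)[of 0] line_pt_0[OF w] by simp
  then have "finite {t. poly P t = poly Q t}"
    using poly_roots_finite[of "P - Q"] by auto
  then have "card S \<le> card {t. poly P t = poly Q t}"
    using agree by (rule card_mono)
  also have "\<dots> \<le> max (degree P) (degree Q)"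
    using differ by (rule card_poly_agree_le)
  finally show ?thesis
    using P(1) Q(1) unfolding S_def by linarith
qed

lemma card_le_by_lines_through:
  fixes w :: "nat \<Rightarrow> 'a::{finite,field}"
  assumes B: "B \<subseteq> cube d UNIV"
    and per_line: "\<And>z. z \<in> cube d UNIV \<Longrightarrow> card {s. s \<noteq> 0 \<and> line_pt d w z s \<in> B} \<le> m"
  shows "(card (UNIV :: 'a set) - 1) * card B \<le> card (cube d (UNIV :: 'a set)) * m"
proof -
  let ?C = "cube d (UNIV :: 'a set)" and ?T = "UNIV - {0 :: 'a}"
  have "finite ?C"
    unfolding cube_def by (intro finite_PiE) auto
  have "(card (UNIV :: 'a set) - 1) * card B = (\<Sum>s\<in>?T. card {z \<in> ?C. line_pt d w z s \<in> B})"
    using card_bij_betw_preimage[OF bij_betw_line_pt_dilation B] by simp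
  also have "\<dots> = (\<Sum>z\<in>?C. card {s \<in> ?T. line_pt d w z s \<in> B})"
    unfolding card_eq_sum using \<open>finite ?C\<close> by (intro sum.swap_restrict[symmetric]) auto
  also have "\<dots> \<le> card ?C * m"
    using sum_bounded_above[of ?C "\<lambda>z. card {s \<in> ?T. line_pt d w z s \<in> B}" m] per_line
    by (simp add: conj_commute)
  finally show ?thesis .
qed

lemma prob_unif_ge_one_minus:
  assumes "finite S" and "S \<noteq> {}" and "q > 0"
    and "q * card {z \<in> S. \<not> P z} \<le> card S * N"
  shows "prob_unif S P \<ge> 1 - real N / real q"
proof -
  have "card {z \<in> S. P z} + card {z \<in> S. \<not> P z} = card S"
    using assms(1) by (subst card_Un_disjoint[symmetric]) (auto intro: arg_cong[where f = card])
  then have "prob_unif S P = 1 - real (card {z \<in> S. \<not> P z}) / real (card S)"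
    using assms(1,2) unfolding prob_unif_def by (simp add: field_simps flip: of_nat_add)
  moreover have "real (card {z \<in> S. \<not> P z}) / real (card S) \<le> real N / real q"
    using assms by (simp add: field_simps card_gt_0_iff flip: of_nat_mult)
  ultimately show ?thesis by simp
qed

lemma prob_unif_honest_prover:
  fixes At :: "(nat \<Rightarrow> 'a::{finite,field}) \<Rightarrow> 'a"
  assumes "w \<in> cube d UNIV"
    and "\<And>z. is_poly_deg_lt (\<lambda>t. At (line_pt d w z t)) D"
  shows "prob_unif (cube d UNIV) (\<lambda>z. alice_output D d At w (\<lambda>L. At) z = Some (At w)) = 1"
proof -
  have "finite (cube d (UNIV :: 'a set))"
    unfolding cube_def by (intro finite_PiE) auto
  moreover have "{z \<in> cube d UNIV. alice_output D d At w (\<lambda>L. At) z = Some (At w)} = cube d UNIV"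
    using alice_output_honest[OF assms(1) _ assms(2)] by blast
  ultimately show ?thesis
    using assms(1) unfolding prob_unif_def by (auto simp: card_gt_0_iff)
qed

lemma prob_unif_not_fooled:
  fixes At :: "(nat \<Rightarrow> 'a::{finite,field}) \<Rightarrow> 'a"
  assumes w: "w \<in> cube d UNIV"
    and deg: "\<And>z. is_poly_deg_lt (\<lambda>t. At (line_pt d w z t)) (real N)"
  shows "prob_unif (cube d UNIV) (\<lambda>z. alice_output (real N) d At w r z \<in> {Some (At w), None})
           \<ge> 1 - real N / real (card (UNIV :: 'a set))"
proof -
  let ?C = "cube d (UNIV :: 'a set)" and ?q = "card (UNIV :: 'a set)"
  define B where "B = {z \<in> ?C. alice_fooled (real N) d At w r z}"
  have "finite ?C"
    unfolding cube_def by (intro finite_PiE) auto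
  have "card {s. s \<noteq> 0 \<and> line_pt d w z s \<in> B} \<le> N - 1" for z
  proof -
    have "{s. s \<noteq> 0 \<and> line_pt d w z s \<in> B} =
        {s. s \<noteq> 0 \<and> alice_fooled (real N) d At w r (line_pt d w z s)}"
      unfolding B_def using line_pt_in_cube by blast
    then show ?thesis
      using card_fooled_on_line_less[OF w deg[of z], of r] by simp
  qed
  then have "(?q - 1) * card B \<le> card ?C * (N - 1)"
    by (intro card_le_by_lines_through) (auto simp: B_def)
  moreover have "card B \<le> card ?C" and "N > 0"
    using \<open>finite ?C\<close> deg[of w] by (auto simp: B_def is_poly_deg_lt_def intro: card_mono)
  ultimately have "?q * card B \<le> card ?C * N"
    by (cases ?q; cases N) (auto simp: algebra_simps)
  then show ?thesis
    using w \<open>finite ?C\<close>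
    by (intro prob_unif_ge_one_minus) (auto simp: B_def alice_fooled_def card_gt_0_iff)
qed

lemma lde_degree_less:
  fixes n k d m :: nat
  assumes "n = 2 ^ k" and "n > 4" and "d * k = 2 * n" and "m\<^sup>2 = n"
  shows "d * (m - 1) < n * m"
proof -
  have "k \<ge> 2"
  proof (rule ccontr)
    assume "\<not> k \<ge> 2"
    then have "k = 0 \<or> k = 1" by auto
    then show False using assms(1,2) by auto
  qed
  then have "d * 2 \<le> d * k" by simp
  then have "d \<le> n"
    using assms(3) by simp
  moreover have "m \<ge> 1"
    using assms(2,4) by (cases m) auto
  ultimately have "d * (m - 1) \<le> n * (m - 1)" and "n * (m - 1) < n * m"
    using assms(2) by auto
  then show ?thesis by linarith
qed

lemma powr_three_halves:
  assumes "m\<^sup>2 = n"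
  shows "real n powr 1.5 = real (n * m)"
proof (cases "n = 0")
  case True
  then show ?thesis by simp
next
  case False
  have "real n powr 1.5 = real n powr (1 + 1/2)"
    by simp
  also have "\<dots> = real n * sqrt (real n)"
    using False by (subst powr_add) (simp add: powr_half_sqrt)
  also have "\<dots> = real (n * m)"
    using assms by (metis of_nat_0_le_iff of_nat_mult of_nat_power real_sqrt_unique)
  finally show ?thesis .
qed

theorem mainTheorem3:
  fixes n k d c :: nat and H :: "'a::{finite,field} set"
    and \<pi> :: "(nat \<Rightarrow> 'a) \<Rightarrow> nat" and a :: "nat \<Rightarrow> 'a" and w :: "nat \<Rightarrow> 'a"
  assumes n_def: "n = 2 ^ k" and k_even: "even k" and n_gt: "n > 4"
    and d_def: "d * k = 2 * n"
    and c_ge: "c \<ge> 2" and card_F: "card (UNIV :: 'a set) = n ^ c"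
    and card_H: "(card H)\<^sup>2 = n"
    and pi_bij: "bij_betw \<pi> (cube d H) {1..2 ^ n}"
    and w_in: "w \<in> cube d (UNIV :: 'a set)"
  shows "(\<exists>r. prob_unif (cube d (UNIV :: 'a set))
              (\<lambda>z. alice_output (real n powr 1.5) d (lde H d (\<lambda>h. a (\<pi> h))) w r z
                   = Some (lde H d (\<lambda>h. a (\<pi> h)) w)) = 1)
       \<and> (\<forall>r. prob_unif (cube d (UNIV :: 'a set))
              (\<lambda>z. alice_output (real n powr 1.5) d (lde H d (\<lambda>h. a (\<pi> h))) w r z
                   \<in> {Some (lde H d (\<lambda>h. a (\<pi> h)) w), None})
            \<ge> 1 - 1 / real n powr (real c - 1.5))"
proof -
  define At where "At = lde H d (\<lambda>h. a (\<pi> h))"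
  define N where "N = n * card H"
  have N: "real n powr 1.5 = real N"
    unfolding N_def using card_H by (rule powr_three_halves)
  have deg: "is_poly_deg_lt (\<lambda>t. At (line_pt d w z t)) (real N)" for z
  proof -
    obtain p where "degree p \<le> d * (card H - 1)" "\<forall>t. At (line_pt d w z t) = poly p t"
      using lde_on_line_is_poly[of H d "\<lambda>h. a (\<pi> h)" w z] unfolding At_def by auto
    then show ?thesis
      using lde_degree_less[OF n_def n_gt d_def card_H] unfolding is_poly_deg_lt_def N_def
      by (metis le_less_trans of_nat_less_iff)
  qed
  have "1 / real n powr (real c - 1.5) = real N / real (card (UNIV :: 'a set))"
    using n_gt by (simp add: card_F powr_diff powr_realpow N flip: N)
  then show ?thesis
    using prob_unif_honest_prover[OF w_in deg] prob_unif_not_fooled[OF w_in deg]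
    unfolding N At_def by auto
qed

end
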